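(* For each $a\in A\setminus\{a^*\}$ and $\ell\in\mathbb{R}$: (1) $I_{a^*,a}(\ell)-I_{a,a}(\ell)=-\ell$; (2) $I_{a^*,a}(\ell)\ge I_{a^*,a}(\hat L_a(a))$ whenever $\ell\le\hat L_a(a)$.
   Context: Finite action set $A$, $a^*\in A$. A measurable space $Z$ with $\sigma$-finite measure $\nu$; for each $n$ and $a\in A$, a probability measure $\mu^n_a$ on $Z$ with density $g^n_a$ w.r.t. $\nu$. For $a'\neq a^*$, $L_n(a')=\frac1n\log\frac{g^n_{a^*}(z)}{g^n_{a'}(z)}$, well-defined $\mu^n_a$-a.s. for all $a\in A$; $\mathbb{P}_a$ is probability under $\mu^n_a$. For each $a\in A$, $a'\neq a^*$, $I_{a,a'}:\mathbb{R}\to[0,\infty]$ is a rate function: for all measurable $B\subseteq\mathbb{R}$, $-\inf_{\mathrm{int}B}I_{a,a'}\le\liminf_n\frac1n\log\mathbb{P}_a[L_n(a')\in B]\le\limsup_n\frac1n\log\mathbb{P}_a[L_n(a')\in B]\le-\inf_{\mathrm{cl}B}I_{a,a'}$. Each $I_{a,a'}$ has a unique minimizer $\hat L_a(a')$, with $\hat L_a(a')\neq\hat L_{\tilde a}(a')$ for $a\neq\tilde a$, and compact level sets; $I_{a^*,a'}$ is continuous at $\hat L_{a'}(a')$ and $\hat L_{a^*}(a')$. *)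

theory Defs
  imports "HOL-Probability.Probability"
begin

definition llr :: "(nat \<Rightarrow> 'a \<Rightarrow> 'z \<Rightarrow> real) \<Rightarrow> 'a \<Rightarrow> nat \<Rightarrow> 'a \<Rightarrow> 'z \<Rightarrow> real" where
  "llr g astar n a' z = ln (g n astar z / g n a' z) / real n"

definition mu :: "'z measure \<Rightarrow> (nat \<Rightarrow> 'a \<Rightarrow> 'z \<Rightarrow> real) \<Rightarrow> nat \<Rightarrow> 'a \<Rightarrow> 'z measure" where
  "mu nu g n a = density nu (\<lambda>z. ennreal (g n a z))"

definition scaled_log :: "nat \<Rightarrow> real \<Rightarrow> ereal" where
  "scaled_log n p = (if p = 0 then -\<infinity> else ereal (ln p / real n))"

end

theory Submission
  imports Defs
begin

text \<open>On the event that the normalised log-likelihood ratio \<open>L\<^sub>n(a)\<close> lies in the window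
  \<open>[l - d, l + d]\<close>, the densities of \<open>\<mu>\<^sup>n\<^sub>a\<^sub>*\<close> and \<open>\<mu>\<^sup>n\<^sub>a\<close> differ by a factor between
  \<open>e\<^bsup>n(l-d)\<^esup>\<close> and \<open>e\<^bsup>n(l+d)\<^esup>\<close>. Hence the two probabilities of the window agree up to
  these factors on the exponential scale, and the large deviation bounds for shrinking windows,
  together with lower semicontinuity of the rate functions (closed level sets), give
  \<open>I\<^sub>a\<^sub>*\<^sub>,\<^sub>a(l) = I\<^sub>a\<^sub>,\<^sub>a(l) - l\<close>. Part (2) follows because \<open>\<hat>L\<^sub>a(a)\<close> minimises \<open>I\<^sub>a\<^sub>,\<^sub>a\<close>
  and \<open>-l\<close> decreases in \<open>l\<close>.\<close>

lemma measure_density_le_scaled: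
  fixes M :: "'z measure" and f h :: "'z \<Rightarrow> real"
  assumes f: "f \<in> borel_measurable M" and h: "h \<in> borel_measurable M" and E: "E \<in> sets M"
    and c: "0 \<le> c" and finite: "emeasure (density M h) E \<noteq> \<infinity>"
    and le: "AE z in M. 0 < f z \<longrightarrow> z \<in> E \<longrightarrow> c * f z \<le> h z"
  shows "c * measure (density M f) E \<le> measure (density M h) E"
proof -
  have "ennreal c * emeasure (density M f) E = (\<integral>\<^sup>+ z. ennreal c * (ennreal (f z) * indicator E z) \<partial>M)"
    using f E by (simp add: emeasure_density nn_integral_cmult)
  also have "\<dots> \<le> (\<integral>\<^sup>+ z. ennreal (h z) * indicator E z \<partial>M)"
  proof (rule nn_integral_mono_AE)
    show "AE z in M. ennreal c * (ennreal (f z) * indicator E z) \<le> ennreal (h z) * indicator E z"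
      using le
    proof eventually_elim
      case (elim z)
      show ?case
      proof (cases "z \<in> E \<and> 0 < f z")
        case True
        then have "ennreal (c * f z) \<le> ennreal (h z)" using elim by (intro ennreal_leI) auto
        then show ?thesis using True c by (simp add: ennreal_mult)
      qed (auto simp: ennreal_neg)
    qed
  qed
  also have "\<dots> = emeasure (density M h) E"
    using h E by (simp add: emeasure_density)
  finally have "ennreal c * emeasure (density M f) E \<le> emeasure (density M h) E" .
  then have "enn2real (ennreal c * emeasure (density M f) E) \<le> measure (density M h) E"
    unfolding measure_def using finite by (simp add: enn2real_mono top.not_eq_extremum)
  then show ?thesis
    using c by (simp add: measure_def enn2real_mult)
qed

lemma exp_mult_le_of_le_ln_ratio:
  fixes x y n a :: real
  assumes "0 < x" "0 < y" "0 < n" "a \<le> ln (x / y) / n"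
  shows "exp (n * a) * y \<le> x"
proof -
  have "n * a \<le> ln (x / y)" using assms by (simp add: field_simps)
  then have "exp (n * a) \<le> x / y" using assms by (metis divide_pos_pos exp_le_cancel_iff exp_ln)
  then show ?thesis using assms by (simp add: field_simps)
qed

lemma exp_mult_le_of_ln_ratio_le:
  fixes x y n b :: real
  assumes "0 < x" "0 < y" "0 < n" "ln (x / y) / n \<le> b"
  shows "exp (n * - b) * x \<le> y"
proof (rule exp_mult_le_of_le_ln_ratio)
  show "- b \<le> ln (y / x) / n" using assms by (simp add: ln_div field_simps)
qed (use assms in auto)

lemma llr_window_sets:
  assumes "g n x \<in> borel_measurable nu" "g n y \<in> borel_measurable nu"
  shows "{z \<in> space nu. llr g x n y z \<in> {l - d..l + d}} \<in> sets nu"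
proof -
  have "llr g x n y \<in> borel_measurable nu"
    unfolding llr_def[abs_def] using assms by measurable
  then show ?thesis by measurable
qed

lemma AE_support_of_AE_mu:
  assumes "g n b \<in> borel_measurable nu"
    and "AE z in mu nu g n b. 0 < g n x z \<and> 0 < g n y z" and "\<And>z. 0 < g n x z \<Longrightarrow> 0 < g n y z \<Longrightarrow> P z"
  shows "AE z in nu. 0 < g n b z \<longrightarrow> P z"
proof -
  have "(\<lambda>z. ennreal (g n b z)) \<in> borel_measurable nu" using assms(1) by measurable
  then show ?thesis using assms(2,3) unfolding mu_def by (auto simp: AE_density elim: AE_mp)
qed

lemma measure_llr_window_tilt_lower:
  assumes x: "g n x \<in> borel_measurable nu" and y: "g n y \<in> borel_measurable nu"
    and fin: "finite_measure (mu nu g n x)"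
    and pos: "AE z in mu nu g n y. 0 < g n x z \<and> 0 < g n y z" and n: "1 \<le> n"
  shows "exp (real n * (l - d)) * measure (mu nu g n y) {z \<in> space nu. llr g x n y z \<in> {l - d..l + d}}
    \<le> measure (mu nu g n x) {z \<in> space nu. llr g x n y z \<in> {l - d..l + d}}"
    (is "_ * measure _ ?W \<le> _")
  unfolding mu_def
proof (rule measure_density_le_scaled)
  show "?W \<in> sets nu" using x y by (rule llr_window_sets)
  show "emeasure (density nu (\<lambda>z. ennreal (g n x z))) ?W \<noteq> \<infinity>"
    using finite_measure.emeasure_finite[OF fin] by (simp add: mu_def)
  show "AE z in nu. 0 < g n y z \<longrightarrow> z \<in> ?W \<longrightarrow> exp (real n * (l - d)) * g n y z \<le> g n x z"
    using n by (intro AE_support_of_AE_mu[OF y pos]) (auto simp: llr_def intro: exp_mult_le_of_le_ln_ratio)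
qed (use x y in simp_all)

lemma measure_llr_window_tilt_upper:
  assumes x: "g n x \<in> borel_measurable nu" and y: "g n y \<in> borel_measurable nu"
    and fin: "finite_measure (mu nu g n y)"
    and pos: "AE z in mu nu g n x. 0 < g n x z \<and> 0 < g n y z" and n: "1 \<le> n"
  shows "exp (real n * (- l - d)) * measure (mu nu g n x) {z \<in> space nu. llr g x n y z \<in> {l - d..l + d}}
    \<le> measure (mu nu g n y) {z \<in> space nu. llr g x n y z \<in> {l - d..l + d}}"
    (is "_ * measure _ ?W \<le> _")
  unfolding mu_def
proof (rule measure_density_le_scaled)
  show "?W \<in> sets nu" using x y by (rule llr_window_sets)
  show "emeasure (density nu (\<lambda>z. ennreal (g n y z))) ?W \<noteq> \<infinity>"
    using finite_measure.emeasure_finite[OF fin] by (simp add: mu_def)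
  show "AE z in nu. 0 < g n x z \<longrightarrow> z \<in> ?W \<longrightarrow> exp (real n * (- l - d)) * g n x z \<le> g n y z"
    using n by (intro AE_support_of_AE_mu[OF x pos])
      (auto simp: llr_def intro: exp_mult_le_of_ln_ratio_le[where b = "l + d", simplified])
qed (use x y in simp_all)

lemma add_scaled_log_le_of_exp_mult_le:
  assumes n: "1 \<le> n" and q: "0 \<le> q" and le: "exp (real n * c) * q \<le> p"
  shows "ereal c + scaled_log n q \<le> scaled_log n p"
proof (cases "q = 0")
  case False
  with q have "0 < q" by simp
  then have "0 < exp (real n * c) * q" by simp
  with le have "0 < p" by linarith
  have "real n * c + ln q = ln (exp (real n * c) * q)"
    using \<open>0 < q\<close> by (simp add: ln_mult)
  also have "\<dots> \<le> ln p"
    using le \<open>0 < exp (real n * c) * q\<close> by simp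
  finally have "(real n * c + ln q) / real n \<le> ln p / real n"
    by (simp add: divide_right_mono)
  then have "c + ln q / real n \<le> ln p / real n"
    using n by (simp add: add_divide_distrib)
  with \<open>0 < q\<close> \<open>0 < p\<close> show ?thesis by (simp add: scaled_log_def)
qed (simp add: scaled_log_def)

text \<open>Closed level sets make \<open>J\<close> lower semicontinuous, so its infimum over shrinking
  windows around \<open>l\<close> converges to \<open>J l\<close>.\<close>

lemma le_of_INF_window_le:
  fixes J :: "real \<Rightarrow> ereal"
  assumes closed: "\<And>c. closed {x. J x \<le> ereal c}"
    and window: "\<And>d. 0 < d \<Longrightarrow> (INF x\<in>{l - d..l + d}. J x) \<le> K + ereal d"
  shows "J l \<le> K"
proof (rule ccontr)
  assume "\<not> J l \<le> K"
  then have "K < J l" by simp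
  then obtain c where "K < ereal c" "ereal c < J l"
    using ereal_dense2 by blast
  from \<open>K < ereal c\<close> obtain c' where "K < ereal c'" "ereal c' < ereal c"
    using ereal_dense2 by blast
  have "open (- {x. J x \<le> ereal c})" using closed by auto
  moreover have "l \<in> - {x. J x \<le> ereal c}" using \<open>ereal c < J l\<close> by auto
  ultimately obtain r where "0 < r" and r: "\<And>y. dist y l < r \<Longrightarrow> y \<in> - {x. J x \<le> ereal c}"
    unfolding open_dist by (metis dist_commute)
  define d where "d = min (r / 2) (c - c')"
  have "0 < d" "d < r" "d \<le> c - c'"
    using \<open>0 < r\<close> \<open>ereal c' < ereal c\<close> by (simp_all add: d_def)
  have "ereal c \<le> (INF x\<in>{l - d..l + d}. J x)"
  proof (rule INF_greatest)
    fix x assume "x \<in> {l - d..l + d}"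
    then have "dist x l < r" using \<open>d < r\<close> by (simp add: dist_real_def abs_less_iff)
    then show "ereal c \<le> J x" using r[of x] by simp
  qed
  also have "\<dots> \<le> K + ereal d" using window \<open>0 < d\<close> by simp
  also have "\<dots> < ereal c"
    using \<open>K < ereal c'\<close> \<open>d \<le> c - c'\<close> by (cases K) auto
  finally show False by simp
qed

text \<open>Here \<open>p d n\<close> and \<open>q d n\<close> stand for the probabilities of the window \<open>[l - d, l + d]\<close>
  at stage \<open>n\<close> under two laws with rate functions \<open>J\<close> and \<open>K\<close>.\<close>

lemma rate_le_of_tilt:
  fixes J K :: "real \<Rightarrow> ereal" and p q :: "real \<Rightarrow> nat \<Rightarrow> real"
  assumes K_closed: "\<And>y. closed {x. K x \<le> ereal y}"
    and p_lower: "\<And>d. 0 < d \<Longrightarrow> - J l \<le> liminf (\<lambda>n. scaled_log n (p d n))"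
    and q_upper: "\<And>d. 0 < d \<Longrightarrow> limsup (\<lambda>n. scaled_log n (q d n)) \<le> - (INF x\<in>{l - d..l + d}. K x)"
    and p_nonneg: "\<And>d n. 0 \<le> p d n"
    and tilt: "\<And>d n. 0 < d \<Longrightarrow> 1 \<le> n \<Longrightarrow> exp (real n * (c - d)) * p d n \<le> q d n"
  shows "K l \<le> J l - ereal c"
proof (rule le_of_INF_window_le[OF K_closed])
  fix d :: real assume "0 < d"
  have "ereal (c - d) + - J l \<le> ereal (c - d) + liminf (\<lambda>n. scaled_log n (p d n))"
    using p_lower[OF \<open>0 < d\<close>] by (rule add_left_mono)
  also have "\<dots> = liminf (\<lambda>n. ereal (c - d) + scaled_log n (p d n))"
    by (rule Liminf_add_ereal_left[symmetric]) simp_all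
  also have "\<dots> \<le> liminf (\<lambda>n. scaled_log n (q d n))"
    using eventually_ge_at_top[of 1]
    by (intro Liminf_mono, eventually_elim) (simp add: add_scaled_log_le_of_exp_mult_le p_nonneg tilt \<open>0 < d\<close>)
  also have "\<dots> \<le> limsup (\<lambda>n. scaled_log n (q d n))"
    by (rule Liminf_le_Limsup) simp
  also have "\<dots> \<le> - (INF x\<in>{l - d..l + d}. K x)"
    using q_upper[OF \<open>0 < d\<close>] .
  finally show "(INF x\<in>{l - d..l + d}. K x) \<le> J l - ereal c + ereal d"
    by (cases "J l"; cases "INF x\<in>{l - d..l + d}. K x") auto
qed

lemma rate_eq_of_tilt:
  fixes J K :: "real \<Rightarrow> ereal" and p q :: "real \<Rightarrow> nat \<Rightarrow> real"
  assumes J_closed: "\<And>y. closed {x. J x \<le> ereal y}" and K_closed: "\<And>y. closed {x. K x \<le> ereal y}"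
    and p_lower: "\<And>d. 0 < d \<Longrightarrow> - J l \<le> liminf (\<lambda>n. scaled_log n (p d n))"
    and q_lower: "\<And>d. 0 < d \<Longrightarrow> - K l \<le> liminf (\<lambda>n. scaled_log n (q d n))"
    and p_upper: "\<And>d. 0 < d \<Longrightarrow> limsup (\<lambda>n. scaled_log n (p d n)) \<le> - (INF x\<in>{l - d..l + d}. J x)"
    and q_upper: "\<And>d. 0 < d \<Longrightarrow> limsup (\<lambda>n. scaled_log n (q d n)) \<le> - (INF x\<in>{l - d..l + d}. K x)"
    and p_nonneg: "\<And>d n. 0 \<le> p d n" and q_nonneg: "\<And>d n. 0 \<le> q d n"
    and tilt_pq: "\<And>d n. 0 < d \<Longrightarrow> 1 \<le> n \<Longrightarrow> exp (real n * (l - d)) * p d n \<le> q d n"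
    and tilt_qp: "\<And>d n. 0 < d \<Longrightarrow> 1 \<le> n \<Longrightarrow> exp (real n * (- l - d)) * q d n \<le> p d n"
  shows "K l = J l - ereal l"
proof -
  have "K l \<le> J l - ereal l"
    using K_closed p_lower q_upper p_nonneg tilt_pq by (rule rate_le_of_tilt[where c = l])
  moreover have "J l \<le> K l - ereal (- l)"
    using J_closed q_lower p_upper q_nonneg tilt_qp by (rule rate_le_of_tilt[where c = "- l"])
  ultimately show ?thesis
    by (cases "J l"; cases "K l") auto
qed

theorem lemma4:
  fixes A :: "'a set" and astar :: 'a
    and nu :: "'z measure"
    and g :: "nat \<Rightarrow> 'a \<Rightarrow> 'z \<Rightarrow> real"
    and I :: "'a \<Rightarrow> 'a \<Rightarrow> real \<Rightarrow> ereal"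
    and Lhat :: "'a \<Rightarrow> 'a \<Rightarrow> real" and a :: 'a and l :: real
  assumes finA: "finite A" and astarA: "astar \<in> A"
    and sf: "sigma_finite_measure nu"
    and g_meas: "\<And>n a. a \<in> A \<Longrightarrow> g n a \<in> borel_measurable nu"
    and g_nonneg: "\<And>n a z. a \<in> A \<Longrightarrow> z \<in> space nu \<Longrightarrow> g n a z \<ge> 0"
    and prob: "\<And>n a. a \<in> A \<Longrightarrow> prob_space (mu nu g n a)"
    and welldef: "\<And>n a a'. a \<in> A \<Longrightarrow> a' \<in> A - {astar} \<Longrightarrow>
        AE z in mu nu g n a. g n astar z > 0 \<and> g n a' z > 0"
    and I_nonneg: "\<And>a a' x. a \<in> A \<Longrightarrow> a' \<in> A - {astar} \<Longrightarrow> I a a' x \<ge> 0"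
    and LDP_lower: "\<And>a a' B. a \<in> A \<Longrightarrow> a' \<in> A - {astar} \<Longrightarrow> B \<in> sets borel \<Longrightarrow>
        - (INF x\<in>interior B. I a a' x) \<le>
          liminf (\<lambda>n. scaled_log n (measure (mu nu g n a) {z \<in> space nu. llr g astar n a' z \<in> B}))"
    and LDP_upper: "\<And>a a' B. a \<in> A \<Longrightarrow> a' \<in> A - {astar} \<Longrightarrow> B \<in> sets borel \<Longrightarrow>
        limsup (\<lambda>n. scaled_log n (measure (mu nu g n a) {z \<in> space nu. llr g astar n a' z \<in> B}))
          \<le> - (INF x\<in>closure B. I a a' x)"
    and Lhat_min: "\<And>a a' y. a \<in> A \<Longrightarrow> a' \<in> A - {astar} \<Longrightarrow> I a a' (Lhat a a') \<le> I a a' y"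
    and Lhat_unique: "\<And>a a' x. a \<in> A \<Longrightarrow> a' \<in> A - {astar} \<Longrightarrow>
        (\<forall>y. I a a' x \<le> I a a' y) \<Longrightarrow> x = Lhat a a'"
    and Lhat_distinct: "\<And>a b a'. a \<in> A \<Longrightarrow> b \<in> A \<Longrightarrow> a \<noteq> b \<Longrightarrow> a' \<in> A - {astar} \<Longrightarrow>
        Lhat a a' \<noteq> Lhat b a'"
    and level_compact: "\<And>a a' c. a \<in> A \<Longrightarrow> a' \<in> A - {astar} \<Longrightarrow>
        compact {x. I a a' x \<le> ereal c}"
    and cont1: "\<And>a'. a' \<in> A - {astar} \<Longrightarrow> isCont (I astar a') (Lhat a' a')"
    and cont2: "\<And>a'. a' \<in> A - {astar} \<Longrightarrow> isCont (I astar a') (Lhat astar a')"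
    and aA: "a \<in> A - {astar}"
  shows "I astar a l = I a a l - ereal l \<and> (l \<le> Lhat a a \<longrightarrow> I astar a l \<ge> I astar a (Lhat a a))"
proof -
  have a: "a \<in> A" using aA by simp
  define P where "P b x d n = measure (mu nu g n b) {z \<in> space nu. llr g astar n a z \<in> {x - d..x + d}}"
    for b x d n
  have lower: "- I b a x \<le> liminf (\<lambda>n. scaled_log n (P b x d n))" if "b \<in> A" "0 < d" for b x d
  proof -
    have "- I b a x \<le> - (INF y\<in>interior {x - d..x + d}. I b a y)"
      using \<open>0 < d\<close> by (simp add: INF_lower)
    also have "\<dots> \<le> liminf (\<lambda>n. scaled_log n (P b x d n))"
      unfolding P_def by (rule LDP_lower[OF \<open>b \<in> A\<close> aA]) simp
    finally show ?thesis .
  qed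
  have upper: "limsup (\<lambda>n. scaled_log n (P b x d n)) \<le> - (INF y\<in>{x - d..x + d}. I b a y)"
    if "b \<in> A" for b x d
    using LDP_upper[OF that aA, of "{x - d..x + d}"] by (simp add: P_def)
  have closed: "closed {x. I b a x \<le> ereal y}" if "b \<in> A" for b y
    using level_compact[OF that aA] by (rule compact_imp_closed)
  have finite: "finite_measure (mu nu g n b)" if "b \<in> A" for b n
    using prob[OF that] by (rule prob_space.finite_measure)
  have identity: "I astar a x = I a a x - ereal x" for x
  proof (rule rate_eq_of_tilt[where p = "P a x" and q = "P astar x"])
    show "exp (real n * (x - d)) * P a x d n \<le> P astar x d n" if "1 \<le> n" for d n
      unfolding P_def using g_meas a astarA finite welldef[OF a aA] that
      by (intro measure_llr_window_tilt_lower) auto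
    show "exp (real n * (- x - d)) * P astar x d n \<le> P a x d n" if "1 \<le> n" for d n
      unfolding P_def using g_meas a astarA finite welldef[OF astarA aA] that
      by (intro measure_llr_window_tilt_upper) auto
  qed (use a astarA lower upper closed in \<open>auto simp: P_def\<close>)
  have "I astar a (Lhat a a) \<le> I astar a l" if "l \<le> Lhat a a"
    unfolding identity using Lhat_min[OF a aA] that by (intro ereal_minus_mono) auto
  with identity show ?thesis by blast
qed

end
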